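(* Let $M_{1/2} := \mathbb{N}_0[\frac12]$ and let $P(x)$ be a nonzero element of the monoid algebra $\mathbb{Q}[M_{1/2}]$. The following are equivalent: (a) $P(x)$ has only finitely many divisors in $\mathbb{Q}[M_{1/2}]$ up to associates; (b) $P(x)$ satisfies the ACCP, i.e., every ascending chain of principal ideals of $\mathbb{Q}[M_{1/2}]$ starting at $P(x)\mathbb{Q}[M_{1/2}]$ stabilizes; (c) $P(x)$ is atomic, i.e., it is a unit or a finite product of irreducible elements of $\mathbb{Q}[M_{1/2}]$.
   Context: $\mathbb{Q}[M_{1/2}]$ is the integral domain of polynomial expressions $\sum c_i x^{m_i}$ with $c_i \in \mathbb{Q}$ and $m_i$ nonnegative dyadic rationals. *)

theory Defs
  imports Complex_Main "HOL-Library.Poly_Mapping"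
begin

definition dyadics :: "rat set" where
  "dyadics = {q. 0 \<le> q \<and> (\<exists>n::nat. q * 2 ^ n \<in> \<int>)}"

typedef dyadic = dyadics
  morphisms rep_dyadic Abs_dyadic
  unfolding dyadics_def by (rule exI[of _ 0]) auto

setup_lifting type_definition_dyadic

lemma dyadics_add:
  assumes "q \<in> dyadics" "r \<in> dyadics" shows "q + r \<in> dyadics"
proof -
  from assms obtain n m where n: "q * 2 ^ n \<in> \<int>" and m: "r * 2 ^ m \<in> \<int>"
    and nn: "0 \<le> q" "0 \<le> r" unfolding dyadics_def by auto
  have "(q * 2 ^ n) * 2 ^ m \<in> \<int>" "(r * 2 ^ m) * 2 ^ n \<in> \<int>"
    using n m by (auto intro: Ints_mult)
  hence "(q + r) * 2 ^ (n + m) \<in> \<int>"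
    by (simp add: algebra_simps power_add Ints_add)
  thus ?thesis using nn unfolding dyadics_def by auto
qed

instantiation dyadic :: comm_monoid_add
begin
lift_definition zero_dyadic :: dyadic is 0 unfolding dyadics_def by (auto intro: exI[of _ 0])
lift_definition plus_dyadic :: "dyadic \<Rightarrow> dyadic \<Rightarrow> dyadic" is "(+)" by (rule dyadics_add)
instance proof
  fix a b c :: dyadic
  show "a + b + c = a + (b + c)" by transfer simp
  show "a + b = b + a" by transfer simp
  show "0 + a = a" by transfer simp
qed
end

instantiation dyadic :: linorder
begin
lift_definition less_eq_dyadic :: "dyadic \<Rightarrow> dyadic \<Rightarrow> bool" is "(\<le>)" .
lift_definition less_dyadic :: "dyadic \<Rightarrow> dyadic \<Rightarrow> bool" is "(<)" .
instance proof
  fix x y z :: dyadic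
  show "(x < y) = (x \<le> y \<and> \<not> y \<le> x)" by transfer auto
  show "x \<le> x" by transfer simp
  show "x \<le> y \<Longrightarrow> y \<le> z \<Longrightarrow> x \<le> z" by transfer simp
  show "x \<le> y \<Longrightarrow> y \<le> x \<Longrightarrow> x = y" by transfer simp
  show "x \<le> y \<or> y \<le> x" by transfer auto
qed
end

lemma dyadics_diff:
  assumes "q \<in> dyadics" "r \<in> dyadics" shows "max 0 (q - r) \<in> dyadics"
proof (cases "r \<le> q")
  case True
  from assms obtain n m where n: "q * 2 ^ n \<in> \<int>" and m: "r * 2 ^ m \<in> \<int>"
    unfolding dyadics_def by auto
  have "(q * 2 ^ n) * 2 ^ m \<in> \<int>" "(r * 2 ^ m) * 2 ^ n \<in> \<int>"
    using n m by (auto intro: Ints_mult)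
  hence "(q - r) * 2 ^ (n + m) \<in> \<int>"
    by (simp add: algebra_simps power_add Ints_diff)
  thus ?thesis using True unfolding dyadics_def by auto
next
  case False
  thus ?thesis unfolding dyadics_def by (auto intro: exI[of _ 0])
qed

instantiation dyadic :: minus
begin
lift_definition minus_dyadic :: "dyadic \<Rightarrow> dyadic \<Rightarrow> dyadic" is "\<lambda>q r. max 0 (q - r)"
  by (rule dyadics_diff)
instance ..
end

instance dyadic :: ordered_cancel_comm_monoid_add
proof
  fix a b c :: dyadic
  show "a \<le> b \<Longrightarrow> c + a \<le> c + b" by transfer simp
  show "a + b - a = b" by transfer (auto simp: dyadics_def)
  show "a - b - c = a - (b + c)" by transfer (auto simp: dyadics_def)
qed

text \<open>The monoid algebra \<open>\<rat>[M_{1/2}]\<close>: finitely supported functions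
  \<open>M_{1/2} \<rightarrow> \<rat>\<close> with convolution product, i.e. \<open>\<Sum> c_i x^{m_i}\<close>.\<close>

type_synonym QM = "dyadic \<Rightarrow>\<^sub>0 rat"

definition principal_ideal :: "QM \<Rightarrow> QM set" where
  "principal_ideal a = {a * r | r. True}"

text \<open>Irreducible (atom) element of a commutative monoid with zero; this is literally the
  definition of \<open>irreducible\<close> in HOL-Computational_Algebra.Factorial_Ring, which cannot be
  used directly since it lives in class \<open>algebraic_semidom\<close> (requires a division operation).\<close>

definition irred :: "'a :: comm_semiring_1 \<Rightarrow> bool" where
  "irred p \<longleftrightarrow> p \<noteq> 0 \<and> \<not> p dvd 1 \<and> (\<forall>a b. p = a * b \<longrightarrow> a dvd 1 \<or> b dvd 1)"

end

theory Submission
  imports Defs "HOL-Computational_Algebra.Polynomial_Factorial" "HOL-Computational_Algebra.Field_as_Ring"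
begin

text \<open>The ring \<open>\<rat>[M_{1/2}]\<close> is the directed union of the polynomial rings
  \<open>\<rat>[x^{1/2^j}] \<cong> \<rat>[x]\<close>, and any finitely many elements lie in one of them. Its units are
  the nonzero constants, so an atom stays irreducible in such a polynomial ring, which is
  factorial; hence atoms are prime. An atomic element is therefore, up to a unit, a product of
  primes, and its divisors are, up to associates, the subproducts: there are finitely many.
  Finitely many divisor classes force every chain of divisors to stabilise (ACCP), and in an
  integral domain ACCP at an element makes it atomic.\<close>

definition assoc_class :: "'a::comm_monoid_mult \<Rightarrow> 'a set" where
  "assoc_class d = {e. e dvd d \<and> d dvd e}"

lemma assoc_class_eq_iff: "assoc_class d = assoc_class e \<longleftrightarrow> d dvd e \<and> e dvd d"
  unfolding assoc_class_def by (auto intro: dvd_trans)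

text \<open>ACCP at \<open>P\<close>, phrased with divisors: a chain of principal ideals starting at \<open>(P)\<close> is a
  sequence of successive divisors, and it stabilises once \<open>g N\<close> divides all later members.\<close>

definition accp_at :: "'a::comm_monoid_mult \<Rightarrow> bool" where
  "accp_at P \<longleftrightarrow> (\<forall>g. g 0 = P \<and> (\<forall>n. g (Suc n) dvd g n) \<longrightarrow> (\<exists>N. \<forall>n\<ge>N. g N dvd g n))"

definition atomic :: "'a::comm_semiring_1 \<Rightarrow> bool" where
  "atomic P \<longleftrightarrow> P dvd 1 \<or> (\<exists>xs. xs \<noteq> [] \<and> (\<forall>x\<in>set xs. irreducible x) \<and> P = prod_list xs)"

lemma dvd_chain_antimono:
  fixes g :: "nat \<Rightarrow> 'a::comm_monoid_mult"
  assumes "\<And>n. g (Suc n) dvd g n" and "m \<le> n"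
  shows "g n dvd g m"
  using assms(2) by (induction n rule: dec_induct) (auto intro: dvd_trans assms(1))

lemma accp_at_if_finite_divisor_classes:
  fixes P :: "'a::comm_monoid_mult"
  assumes "finite (assoc_class ` {d. d dvd P})"
  shows "accp_at P"
  unfolding accp_at_def
proof (intro allI impI, elim conjE)
  fix g :: "nat \<Rightarrow> 'a"
  assume g0: "g 0 = P" and chain: "\<forall>n. g (Suc n) dvd g n"
  define D where "D n = assoc_class ` {d. d dvd g n}" for n
  have D_antimono: "D n \<subseteq> D m" if "m \<le> n" for m n
    using dvd_chain_antimono[OF _ that] chain unfolding D_def by (blast intro: dvd_trans)
  have finite_D: "finite (D n)" for n
    using D_antimono[of 0 n] assms finite_subset unfolding g0 D_def by auto
  obtain N where N: "\<And>n. card (D N) \<le> card (D n)"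
    using ex_has_least_nat[of "\<lambda>_. True" 0 "\<lambda>n. card (D n)"] by blast
  show "\<exists>N. \<forall>n\<ge>N. g N dvd g n"
  proof (intro exI allI impI)
    fix n assume "N \<le> n"
    then have "D n = D N"
      using D_antimono finite_D N by (meson card_seteq)
    then have "assoc_class (g N) \<in> D n"
      by (simp add: D_def)
    then obtain d where "d dvd g n" "assoc_class (g N) = assoc_class d"
      unfolding D_def by blast
    then show "g N dvd g n"
      by (auto simp: assoc_class_eq_iff intro: dvd_trans)
  qed
qed

lemma irreducible_unit_mult:
  fixes u x :: "'a::comm_semiring_1"
  assumes "u dvd 1" and "irreducible x"
  shows "irreducible (u * x)"
proof (rule irreducible_mono[OF assms(2)])
  show "u * x dvd x" using mult_dvd_mono[OF assms(1) dvd_refl] by simp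
  show "\<not> u * x dvd 1"
    using assms(2) irreducible_not_unit dvd_mult_right by blast
qed

lemma atomic_iff_unit_mult_prod_list:
  "atomic P \<longleftrightarrow> (\<exists>u xs. u dvd 1 \<and> (\<forall>x\<in>set xs. irreducible x) \<and> P = u * prod_list xs)"
proof
  assume "atomic P"
  then consider "P dvd 1" | xs where "\<forall>x\<in>set xs. irreducible x" "P = prod_list xs"
    unfolding atomic_def by blast
  then show "\<exists>u xs. u dvd 1 \<and> (\<forall>x\<in>set xs. irreducible x) \<and> P = u * prod_list xs"
  proof cases
    case 1
    then show ?thesis by (intro exI[of _ P] exI[of _ "[]"]) simp
  next
    case (2 xs)
    then show ?thesis by (intro exI[of _ 1] exI[of _ xs]) simp
  qed
next
  assume "\<exists>u xs. u dvd 1 \<and> (\<forall>x\<in>set xs. irreducible x) \<and> P = u * prod_list xs"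
  then obtain u xs where u: "u dvd 1" and xs: "\<forall>x\<in>set xs. irreducible x"
    and P: "P = u * prod_list xs" by blast
  show "atomic P"
  proof (cases xs)
    case Nil
    then show ?thesis using u P by (simp add: atomic_def)
  next
    case (Cons y ys)
    then have "P = prod_list ((u * y) # ys)" "\<forall>x\<in>set ((u * y) # ys). irreducible x"
      using P xs irreducible_unit_mult[OF u] by (simp_all add: mult.assoc)
    then show ?thesis unfolding atomic_def by blast
  qed
qed

lemma atomic_mult:
  assumes "atomic a" and "atomic b"
  shows "atomic (a * b)"
proof -
  obtain u xs where u: "u dvd 1" and xs: "\<forall>x\<in>set xs. irreducible x" "a = u * prod_list xs"
    using assms(1) unfolding atomic_iff_unit_mult_prod_list by blast
  obtain v ys where v: "v dvd 1" and ys: "\<forall>y\<in>set ys. irreducible y" "b = v * prod_list ys"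
    using assms(2) unfolding atomic_iff_unit_mult_prod_list by blast
  have "u * v dvd 1" using mult_dvd_mono[OF u v] by simp
  moreover have "a * b = (u * v) * prod_list (xs @ ys)" using xs(2) ys(2) by (simp add: ac_simps)
  ultimately show ?thesis
    unfolding atomic_iff_unit_mult_prod_list using xs(1) ys(1) by (metis Un_iff set_append)
qed

lemma not_atomic_factorE:
  fixes x :: "'a::comm_semiring_1"
  assumes "x \<noteq> 0" and "\<not> atomic x"
  obtains y c where "x = y * c" "\<not> c dvd 1" "\<not> atomic y"
proof -
  have "\<not> irreducible x"
  proof
    assume "irreducible x"
    then have "atomic x" unfolding atomic_def by (intro disjI2 exI[of _ "[x]"]) simp
    then show False using assms(2) by contradiction
  qed
  moreover have "\<not> x dvd 1"
    using assms(2) unfolding atomic_def by blast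
  ultimately obtain a b where ab: "x = a * b" "\<not> a dvd 1" "\<not> b dvd 1"
    using assms(1) unfolding irreducible_def by blast
  consider "\<not> atomic a" | "\<not> atomic b"
    using atomic_mult assms(2) ab(1) by blast
  then show thesis
  proof cases
    case 1
    then show ?thesis using that ab by blast
  next
    case 2
    then show ?thesis using that[of b a] ab by (simp add: mult.commute)
  qed
qed

lemma not_atomic_imp_strict_divisor:
  fixes x :: "'a::idom"
  assumes "x \<noteq> 0" and "\<not> atomic x"
  shows "\<exists>y. y \<noteq> 0 \<and> \<not> atomic y \<and> y dvd x \<and> \<not> x dvd y"
proof -
  obtain y c where yc: "x = y * c" "\<not> c dvd 1" "\<not> atomic y"
    using assms by (rule not_atomic_factorE)
  have "y \<noteq> 0" using assms(1) yc(1) by simp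
  moreover have "\<not> x dvd y"
  proof
    assume "x dvd y"
    then obtain e where "y = x * e" by (elim dvdE)
    then have "y = y * (c * e)" using yc(1) by (simp add: ac_simps)
    then have "c * e = 1" using \<open>y \<noteq> 0\<close> by simp
    then show False using yc(2) dvdI[of 1 c e] by simp
  qed
  ultimately show ?thesis using yc by auto
qed

lemma atomic_if_accp_at:
  fixes P :: "'a::idom"
  assumes "P \<noteq> 0" and "accp_at P"
  shows "atomic P"
proof (rule ccontr)
  assume "\<not> atomic P"
  define bad where "bad x \<longleftrightarrow> x \<noteq> 0 \<and> \<not> atomic x" for x :: 'a
  have "\<forall>x. \<exists>y. bad x \<longrightarrow> bad y \<and> y dvd x \<and> \<not> x dvd y"
    using not_atomic_imp_strict_divisor unfolding bad_def by blast
  then obtain f where f: "\<forall>x. bad x \<longrightarrow> bad (f x) \<and> f x dvd x \<and> \<not> x dvd f x"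
    by (rule choice[THEN exE])
  define g where "g n = (f ^^ n) P" for n
  have bad_g: "bad (g n)" for n
  proof (induction n)
    case 0
    then show ?case using assms(1) \<open>\<not> atomic P\<close> by (simp add: g_def bad_def)
  next
    case (Suc n)
    then show ?case using f by (simp add: g_def)
  qed
  have "g 0 = P" by (simp add: g_def)
  moreover have "g (Suc n) dvd g n" for n using f bad_g by (simp add: g_def)
  ultimately obtain N where "\<forall>n\<ge>N. g N dvd g n"
    using assms(2) unfolding accp_at_def by blast
  then have "g N dvd g (Suc N)" by simp
  moreover have "\<not> g N dvd g (Suc N)" using f bad_g by (simp add: g_def)
  ultimately show False by contradiction
qed

lemma dvd_prod_list_prime_elems_imp_associated_subseq:
  fixes d :: "'a::idom"
  assumes "\<forall>x\<in>set xs. prime_elem x" and "d dvd prod_list xs"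
  shows "\<exists>ys\<in>set (subseqs xs). d dvd prod_list ys \<and> prod_list ys dvd d"
  using assms
proof (induction xs arbitrary: d)
  case Nil
  then show ?case by simp
next
  case (Cons x xs)
  then have x: "prime_elem x" and xs: "\<forall>x\<in>set xs. prime_elem x" by simp_all
  show ?case
  proof (cases "x dvd d")
    case True
    then obtain d' where d': "d = x * d'" by (elim dvdE)
    then have "d' dvd prod_list xs" using Cons.prems(2) x by simp
    then obtain ys where "ys \<in> set (subseqs xs)" "d' dvd prod_list ys" "prod_list ys dvd d'"
      using Cons.IH[OF xs] by blast
    then show ?thesis
      using d' by (intro bexI[of _ "x # ys"]) (simp_all add: Let_def)
  next
    case False
    obtain e where e: "x * prod_list xs = d * e" using Cons.prems(2) by (auto elim: dvdE)
    then have "x dvd d * e" unfolding e[symmetric] by simp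
    then obtain e' where "e = x * e'" using x False by (auto dest: prime_elem_dvd_multD)
    then have "x * prod_list xs = x * (d * e')" using e by (simp add: ac_simps)
    then have "d dvd prod_list xs" using x by simp
    then obtain ys where "ys \<in> set (subseqs xs)" "d dvd prod_list ys" "prod_list ys dvd d"
      using Cons.IH[OF xs] by blast
    then show ?thesis by (intro bexI[of _ ys]) (simp_all add: Let_def)
  qed
qed

lemma finite_divisor_classes_if_atomic:
  fixes P :: "'a::idom"
  assumes irreducible_prime: "\<And>x::'a. irreducible x \<Longrightarrow> prime_elem x" and "atomic P"
  shows "finite (assoc_class ` {d. d dvd P})"
proof -
  obtain u xs where u: "u dvd 1" and xs: "\<forall>x\<in>set xs. prime_elem x"
    and P: "P = u * prod_list xs"
    using assms(2) irreducible_prime unfolding atomic_iff_unit_mult_prod_list by blast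
  have P_dvd: "P dvd prod_list xs" using mult_dvd_mono[OF u dvd_refl] P by simp
  have "assoc_class ` {d. d dvd P} \<subseteq> (\<lambda>ys. assoc_class (prod_list ys)) ` set (subseqs xs)"
  proof clarify
    fix d assume "d dvd P"
    then obtain ys where "ys \<in> set (subseqs xs)" "d dvd prod_list ys" "prod_list ys dvd d"
      using dvd_prod_list_prime_elems_imp_associated_subseq[OF xs] dvd_trans P_dvd by blast
    then show "assoc_class d \<in> (\<lambda>ys. assoc_class (prod_list ys)) ` set (subseqs xs)"
      by (intro image_eqI[of _ _ ys]) (simp_all add: assoc_class_eq_iff)
  qed
  then show ?thesis by (rule finite_surj[OF finite_set])
qed

definition dyadic_frac :: "nat \<Rightarrow> nat \<Rightarrow> dyadic" where
  "dyadic_frac j i = Abs_dyadic (of_nat i / 2 ^ j)"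

lemma rep_dyadic_frac: "rep_dyadic (dyadic_frac j i) = of_nat i / 2 ^ j"
  unfolding dyadic_frac_def
  by (rule Abs_dyadic_inverse) (auto simp: dyadics_def intro!: exI[of _ j])

lemma dyadic_frac_add: "dyadic_frac j (i + k) = dyadic_frac j i + dyadic_frac j k"
  by (simp add: rep_dyadic_inject[symmetric] plus_dyadic.rep_eq rep_dyadic_frac add_divide_distrib)

lemma dyadic_frac_0 [simp]: "dyadic_frac j 0 = 0"
  by (simp add: rep_dyadic_inject[symmetric] zero_dyadic.rep_eq rep_dyadic_frac)

lemma dyadic_frac_eq_iff [simp]: "dyadic_frac j i = dyadic_frac j k \<longleftrightarrow> i = k"
  by (simp add: rep_dyadic_inject[symmetric] rep_dyadic_frac)

lemma dyadic_frac_rescale: "dyadic_frac j i = dyadic_frac (j + m) (i * 2 ^ m)"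
  by (simp add: rep_dyadic_inject[symmetric] rep_dyadic_frac power_add)

lemma range_dyadic_frac_mono:
  assumes "j \<le> j'"
  shows "range (dyadic_frac j) \<subseteq> range (dyadic_frac j')"
proof clarify
  fix i
  obtain m where "j' = j + m" using assms by (auto simp: le_iff_add)
  then show "dyadic_frac j i \<in> range (dyadic_frac j')" using dyadic_frac_rescale[of j i m] by simp
qed

lemma ex_dyadic_frac: "\<exists>j i. d = dyadic_frac j i"
proof -
  obtain n where n: "rep_dyadic d * 2 ^ n \<in> \<int>" and nonneg: "0 \<le> rep_dyadic d"
    using rep_dyadic[of d] unfolding dyadics_def by auto
  then obtain k where k: "rep_dyadic d * 2 ^ n = of_int k" by (auto elim: Ints_cases)
  have "0 \<le> k" using nonneg k
    by (metis of_int_0_le_iff zero_le_numeral zero_le_power mult_nonneg_nonneg)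
  then have "rep_dyadic d = of_nat (nat k) / 2 ^ n" using k by (simp add: field_simps)
  then show ?thesis by (auto simp: rep_dyadic_inject[symmetric] rep_dyadic_frac)
qed

lemma finite_subset_range_dyadic_frac: "finite K \<Longrightarrow> \<exists>j. K \<subseteq> range (dyadic_frac j)"
proof (induction K rule: finite_induct)
  case (insert d K)
  then obtain j where "K \<subseteq> range (dyadic_frac j)" by blast
  moreover obtain j' i where "d = dyadic_frac j' i" using ex_dyadic_frac by blast
  ultimately show ?case
    using range_dyadic_frac_mono[of j "max j j'"] range_dyadic_frac_mono[of j' "max j j'"]
    by (intro exI[of _ "max j j'"]) auto
qed simp

definition embed_poly :: "nat \<Rightarrow> rat poly \<Rightarrow> QM" where
  "embed_poly j p = (\<Sum>i\<le>degree p. Poly_Mapping.single (dyadic_frac j i) (coeff p i))"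

lemma embed_poly_eq_sum:
  "degree p < n \<Longrightarrow> embed_poly j p = (\<Sum>i<n. Poly_Mapping.single (dyadic_frac j i) (coeff p i))"
  unfolding embed_poly_def by (rule sum.mono_neutral_left) (auto simp: coeff_eq_0)

lemma lookup_embed_poly: "Poly_Mapping.lookup (embed_poly j p) (dyadic_frac j i) = coeff p i"
proof -
  have "embed_poly j p = (\<Sum>k<Suc (max (degree p) i). Poly_Mapping.single (dyadic_frac j k) (coeff p k))"
    by (rule embed_poly_eq_sum) simp
  then have "Poly_Mapping.lookup (embed_poly j p) (dyadic_frac j i)
      = (\<Sum>k<Suc (max (degree p) i). (coeff p k when dyadic_frac j k = dyadic_frac j i))"
    by (simp only: lookup_sum lookup_single)
  also have "\<dots> = (\<Sum>k<Suc (max (degree p) i). (if k = i then coeff p k else 0))"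
    by (intro sum.cong) (auto simp: when_def)
  also have "\<dots> = coeff p i" by simp
  finally show ?thesis .
qed

lemma lookup_embed_poly_outside:
  "d \<notin> range (dyadic_frac j) \<Longrightarrow> Poly_Mapping.lookup (embed_poly j p) d = 0"
  unfolding embed_poly_def by (auto simp: lookup_sum lookup_single when_def intro!: sum.neutral)

lemma embed_poly_eq_iff [simp]: "embed_poly j p = embed_poly j q \<longleftrightarrow> p = q"
proof
  assume "embed_poly j p = embed_poly j q"
  then show "p = q" by (intro poly_eqI) (metis lookup_embed_poly)
qed simp

lemma range_embed_poly: "range (embed_poly j) = {a. Poly_Mapping.keys a \<subseteq> range (dyadic_frac j)}"
proof (intro equalityI subsetI)
  fix a assume "a \<in> range (embed_poly j)"
  then obtain p where "a = embed_poly j p" by blast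
  then show "a \<in> {a. Poly_Mapping.keys a \<subseteq> range (dyadic_frac j)}"
    using lookup_embed_poly_outside[of _ j p] by (auto simp: Poly_Mapping.in_keys_iff)
next
  fix a :: QM assume a: "a \<in> {a. Poly_Mapping.keys a \<subseteq> range (dyadic_frac j)}"
  define f where "f i = Poly_Mapping.lookup a (dyadic_frac j i)" for i
  have "{i. f i \<noteq> 0} = dyadic_frac j -` Poly_Mapping.keys a"
    by (auto simp: f_def Poly_Mapping.in_keys_iff)
  moreover have "finite (dyadic_frac j -` Poly_Mapping.keys a)"
    by (rule finite_vimageI) (auto simp: inj_on_def)
  ultimately have "finite {i. f i \<noteq> 0}" by simp
  then obtain n where n: "\<And>i. f i \<noteq> 0 \<Longrightarrow> i \<le> n"
    using finite_nat_set_iff_bounded_le by auto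
  have coeff_f: "coeff (Abs_poly f) = f"
    by (rule coeff_Abs_poly[of n]) (use n in force)
  have "a = embed_poly j (Abs_poly f)"
  proof (rule poly_mapping_eqI)
    fix d
    show "Poly_Mapping.lookup a d = Poly_Mapping.lookup (embed_poly j (Abs_poly f)) d"
    proof (cases "d \<in> range (dyadic_frac j)")
      case True
      then obtain i where "d = dyadic_frac j i" by blast
      then show ?thesis by (simp add: lookup_embed_poly coeff_f f_def)
    next
      case False
      then have "d \<notin> Poly_Mapping.keys a" using a by blast
      then show ?thesis
        using lookup_embed_poly_outside[OF False] by (simp add: Poly_Mapping.in_keys_iff)
    qed
  qed
  then show "a \<in> range (embed_poly j)" by blast
qed

lemma finite_subset_range_embed_poly:
  assumes "finite A"
  obtains j where "A \<subseteq> range (embed_poly j)"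
proof -
  have "finite (\<Union>a\<in>A. Poly_Mapping.keys a)" using assms by simp
  then obtain j where "(\<Union>a\<in>A. Poly_Mapping.keys a) \<subseteq> range (dyadic_frac j)"
    using finite_subset_range_dyadic_frac by blast
  then show ?thesis using that unfolding range_embed_poly by blast
qed

lemma embed_poly_0 [simp]: "embed_poly j 0 = 0"
  by (simp add: embed_poly_def)

lemma embed_poly_const: "embed_poly j [:c:] = Poly_Mapping.single 0 c"
  by (simp add: embed_poly_def)

lemma embed_poly_1 [simp]: "embed_poly j 1 = 1"
  by (simp add: embed_poly_def)

lemma embed_poly_add: "embed_poly j (p + q) = embed_poly j p + embed_poly j q"
proof -
  obtain n where n: "degree p < n" "degree q < n" "degree (p + q) < n"
    using degree_add_le_max[of p q] by (metis le_imp_less_Suc max.cobounded1 max.cobounded2 order.trans)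
  show ?thesis
    by (simp add: embed_poly_eq_sum[OF n(1)] embed_poly_eq_sum[OF n(2)] embed_poly_eq_sum[OF n(3)]
        single_add sum.distrib)
qed

lemma embed_poly_smult: "embed_poly j (smult c p) = Poly_Mapping.single 0 c * embed_poly j p"
proof -
  obtain n where n: "degree p < n" "degree (smult c p) < n"
    using degree_smult_le[of c p] by (metis le_imp_less_Suc lessI)
  show ?thesis
    by (simp only: embed_poly_eq_sum[OF n(1)] embed_poly_eq_sum[OF n(2)] sum_distrib_left
        mult_single coeff_smult add_0)
qed

lemma embed_poly_pCons_0:
  "embed_poly j (pCons 0 p) = Poly_Mapping.single (dyadic_frac j 1) 1 * embed_poly j p"
proof -
  obtain n where n: "degree p < n" "degree (pCons 0 p) < Suc n"
    using degree_pCons_le[of 0 p] by (metis Suc_less_eq le_imp_less_Suc lessI)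
  have "embed_poly j (pCons 0 p)
      = (\<Sum>i<Suc n. Poly_Mapping.single (dyadic_frac j i) (coeff (pCons 0 p) i))"
    by (rule embed_poly_eq_sum[OF n(2)])
  also have "\<dots> = (\<Sum>i<n. Poly_Mapping.single (dyadic_frac j (Suc i)) (coeff p i))"
    by (simp only: sum.lessThan_Suc_shift coeff_pCons_0 coeff_pCons_Suc single_zero add_0)
  also have "\<dots> = Poly_Mapping.single (dyadic_frac j 1) 1 * embed_poly j p"
    by (simp add: embed_poly_eq_sum[OF n(1)] sum_distrib_left mult_single dyadic_frac_add[symmetric])
  finally show ?thesis .
qed

lemma embed_poly_mult: "embed_poly j (p * q) = embed_poly j p * embed_poly j q"
proof (induction p)
  case (pCons a p)
  have "embed_poly j (pCons a p)
      = Poly_Mapping.single 0 a + Poly_Mapping.single (dyadic_frac j 1) 1 * embed_poly j p"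
    using embed_poly_add[of j "[:a:]" "pCons 0 p"] by (simp add: embed_poly_const embed_poly_pCons_0)
  moreover have "embed_poly j (pCons a p * q)
      = Poly_Mapping.single 0 a * embed_poly j q
        + Poly_Mapping.single (dyadic_frac j 1) 1 * (embed_poly j p * embed_poly j q)"
    by (simp add: embed_poly_add embed_poly_smult embed_poly_pCons_0 pCons.IH)
  ultimately show ?case by (simp add: algebra_simps)
qed simp

lemma embed_poly_dvd: "p dvd q \<Longrightarrow> embed_poly j p dvd embed_poly j q"
  by (auto simp: embed_poly_mult elim!: dvdE)

lemma embed_poly_dvd_1_iff: "embed_poly j p dvd 1 \<longleftrightarrow> p dvd 1"
proof
  assume "embed_poly j p dvd 1"
  then obtain v where v: "1 = embed_poly j p * v" by (elim dvdE)
  have "finite {embed_poly j p, v}" by simp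
  then obtain J where "{embed_poly j p, v} \<subseteq> range (embed_poly J)"
    by (rule finite_subset_range_embed_poly)
  then obtain p' q where p': "embed_poly j p = embed_poly J p'" and q: "v = embed_poly J q"
    by auto
  have "embed_poly J (p' * q) = embed_poly J 1"
    using v by (simp add: embed_poly_mult p' q)
  then have "p' dvd 1" by (metis dvdI embed_poly_eq_iff)
  then obtain c where c: "p' = [:c:]" "c dvd 1" by (elim is_unit_polyE)
  then have "embed_poly j p = embed_poly j [:c:]"
    using p' by (simp add: embed_poly_const)
  then show "p dvd 1" using c(2) by (simp add: is_unit_const_poly_iff)
next
  assume "p dvd 1"
  then show "embed_poly j p dvd 1" using embed_poly_dvd[of p 1 j] by simp
qed

lemma irreducible_if_irreducible_embed_poly:
  assumes "irreducible (embed_poly j p)"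
  shows "irreducible p"
proof (rule irreducibleI)
  show "p \<noteq> 0" "\<not> p dvd 1"
    using assms embed_poly_dvd_1_iff by (auto simp: irreducible_def)
  fix a b assume "p = a * b"
  then have "embed_poly j p = embed_poly j a * embed_poly j b" by (simp add: embed_poly_mult)
  then show "a dvd 1 \<or> b dvd 1"
    using irreducibleD[OF assms] embed_poly_dvd_1_iff by blast
qed

lemma prime_elem_if_irreducible_QM:
  fixes a :: QM
  assumes "irreducible a"
  shows "prime_elem a"
proof (rule prime_elemI)
  show "a \<noteq> 0" "\<not> a dvd 1" using assms by (auto simp: irreducible_def)
  fix b c assume "a dvd b * c"
  then obtain q where q: "b * c = a * q" by (elim dvdE)
  have "finite {a, b, c, q}" by simp
  then obtain J where "{a, b, c, q} \<subseteq> range (embed_poly J)"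
    by (rule finite_subset_range_embed_poly)
  then obtain pa pb pc pq where embed: "a = embed_poly J pa" "b = embed_poly J pb"
    "c = embed_poly J pc" "q = embed_poly J pq"
    by auto
  have "pb * pc = pa * pq"
    using q by (simp add: embed embed_poly_mult[symmetric])
  then have "pa dvd pb * pc" by (rule dvdI)
  moreover have "prime_elem pa"
    using assms irreducible_if_irreducible_embed_poly[of J pa] unfolding embed
    by (simp add: irreducible_imp_prime_elem)
  ultimately have "pa dvd pb \<or> pa dvd pc" by (simp add: prime_elem_dvd_mult_iff)
  then show "a dvd b \<or> a dvd c" unfolding embed by (auto intro: embed_poly_dvd)
qed

lemma principal_ideal_subset_iff: "principal_ideal a \<subseteq> principal_ideal b \<longleftrightarrow> b dvd a"
  unfolding principal_ideal_def by (auto simp: mult.assoc intro: exI[of _ 1] elim!: dvdE)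

lemma principal_ideal_chains_stabilize_iff_accp_at:
  "(\<forall>g :: nat \<Rightarrow> QM. g 0 = P \<and> (\<forall>n. principal_ideal (g n) \<subseteq> principal_ideal (g (Suc n)))
      \<longrightarrow> (\<exists>N. \<forall>n\<ge>N. principal_ideal (g n) = principal_ideal (g N)))
   \<longleftrightarrow> accp_at P"
proof -
  have "(\<forall>n\<ge>N. principal_ideal (g n) = principal_ideal (g N)) \<longleftrightarrow> (\<forall>n\<ge>N. g N dvd g n)"
    if "\<forall>n. g (Suc n) dvd g n" for g :: "nat \<Rightarrow> QM" and N
    using dvd_chain_antimono[of g N] that
    by (auto simp: set_eq_subset principal_ideal_subset_iff)
  then show ?thesis
    unfolding accp_at_def principal_ideal_subset_iff by blast
qed

theorem corollary4p3:
  fixes P :: QM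
  assumes "P \<noteq> 0"
  shows "(finite ((\<lambda>d. {e. e dvd d \<and> d dvd e}) ` {d. d dvd P})
          \<longleftrightarrow> (\<forall>g :: nat \<Rightarrow> QM. g 0 = P \<and> (\<forall>n. principal_ideal (g n) \<subseteq> principal_ideal (g (Suc n)))
                 \<longrightarrow> (\<exists>N. \<forall>n\<ge>N. principal_ideal (g n) = principal_ideal (g N))))
       \<and> ((\<forall>g :: nat \<Rightarrow> QM. g 0 = P \<and> (\<forall>n. principal_ideal (g n) \<subseteq> principal_ideal (g (Suc n)))
                 \<longrightarrow> (\<exists>N. \<forall>n\<ge>N. principal_ideal (g n) = principal_ideal (g N)))
          \<longleftrightarrow> (P dvd 1 \<or> (\<exists>xs. xs \<noteq> [] \<and> (\<forall>x\<in>set xs. irred x) \<and> P = prod_list xs)))"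
proof -
  have classes: "(\<lambda>d. {e. e dvd d \<and> d dvd e}) = (assoc_class :: QM \<Rightarrow> QM set)"
    by (simp add: fun_eq_iff assoc_class_def)
  have atoms: "(P dvd 1 \<or> (\<exists>xs. xs \<noteq> [] \<and> (\<forall>x\<in>set xs. irred x) \<and> P = prod_list xs))
      \<longleftrightarrow> atomic P"
    by (simp add: atomic_def irred_def irreducible_def)
  have "finite (assoc_class ` {d. d dvd P}) \<Longrightarrow> accp_at P"
    by (rule accp_at_if_finite_divisor_classes)
  moreover have "accp_at P \<Longrightarrow> atomic P"
    using assms by (rule atomic_if_accp_at)
  moreover have "atomic P \<Longrightarrow> finite (assoc_class ` {d. d dvd P})"
    using prime_elem_if_irreducible_QM by (rule finite_divisor_classes_if_atomic)
  ultimately show ?thesis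
    unfolding classes atoms principal_ideal_chains_stabilize_iff_accp_at by blast
qed

end
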